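(* A convex $a^2bc$-quadrilateral on the sphere (all angles $<\pi$) satisfies $\alpha+2\beta>\pi$ and $\alpha+2\gamma>\pi$.
   Context: An $a^2bc$-quadrilateral has edges $a,a,b,c$ in cyclic order with $a,b,c$ pairwise distinct; $\alpha$ = angle between the two $a$-edges; $\beta$ = angle between an $a$-edge and the $b$-edge; $\delta$ = angle between the $b$-edge and the $c$-edge; $\gamma$ = angle between the $c$-edge and the other $a$-edge. *)

theory Defs
  imports "HOL-Analysis.Analysis"
begin

definition on_sphere :: "real^3 \<Rightarrow> bool" where
  "on_sphere x \<longleftrightarrow> norm x = 1"

definition sph_dist :: "real^3 \<Rightarrow> real^3 \<Rightarrow> real" where
  "sph_dist u v = arccos (u \<bullet> v)"

definition sph_angle :: "real^3 \<Rightarrow> real^3 \<Rightarrow> real^3 \<Rightarrow> real" where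
  "sph_angle Q P R =
     (let tQ = Q - (P \<bullet> Q) *\<^sub>R P; tR = R - (P \<bullet> R) *\<^sub>R P
      in arccos ((tQ \<bullet> tR) / (norm tQ * norm tR)))"

definition orient :: "real^3 \<Rightarrow> real^3 \<Rightarrow> real^3 \<Rightarrow> real" where
  "orient u v w = u \<bullet> cross3 v w"

text \<open>A convex spherical quadrilateral V0 V1 V2 V3 (vertices in cyclic order,
  either orientation s = 1 or s = -1, edges great arcs V0V1, V1V2, V2V3, V3V0):
  for every edge, the two remaining vertices lie strictly on the interior side of the
  great circle through that edge.  This is exactly the condition that the quadrilateral
  is a simple spherical polygon all of whose interior angles are < pi; under it the
  interior angle at a vertex is the spherical angle sph_angle.\<close>
definition convex_sph_quad :: "real^3 \<Rightarrow> real^3 \<Rightarrow> real^3 \<Rightarrow> real^3 \<Rightarrow> bool" where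
  "convex_sph_quad V0 V1 V2 V3 \<longleftrightarrow>
     on_sphere V0 \<and> on_sphere V1 \<and> on_sphere V2 \<and> on_sphere V3 \<and>
     (\<exists>s::real. (s = 1 \<or> s = -1) \<and>
       s * orient V0 V1 V2 > 0 \<and> s * orient V0 V1 V3 > 0 \<and>
       s * orient V1 V2 V3 > 0 \<and> s * orient V1 V2 V0 > 0 \<and>
       s * orient V2 V3 V0 > 0 \<and> s * orient V2 V3 V1 > 0 \<and>
       s * orient V3 V0 V1 > 0 \<and> s * orient V3 V0 V2 > 0)"

end

theory Submission
  imports Defs
begin

text \<open>The diagonal \<open>V1V3\<close> cuts off the isosceles triangle \<open>V0V1V3\<close> with apex angle
  \<open>\<alpha>\<close> and base angles \<open>\<beta>' = \<gamma>'\<close>.  Writing \<open>p = cos a\<close> and \<open>q = V1 \<bullet> V3\<close>, one computes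
  \<open>cos \<alpha> = (q - p\<^sup>2) / (1 - p\<^sup>2)\<close> and \<open>cos\<^sup>2 \<beta>' = p\<^sup>2 (1 - q) / ((1 - p\<^sup>2) (1 + q))\<close>, so
  \<open>\<alpha> + 2\<beta>' > \<pi>\<close> reduces to \<open>2 p\<^sup>2 < 1 + q\<close>: Cauchy-Schwarz for \<open>V0\<close> and \<open>V1 + V3\<close>,
  strict because the apex is not the midpoint of the base.  Convexity puts \<open>V3\<close> strictly
  inside the angle of the quadrilateral at \<open>V1\<close>, i.e. its tangent direction there is a positive
  combination of those towards \<open>V0\<close> and \<open>V2\<close>, so \<open>\<beta> > \<beta>'\<close>; likewise \<open>\<gamma> > \<gamma>'\<close>.\<close>

definition tangent_at :: "'a::real_inner \<Rightarrow> 'a \<Rightarrow> 'a" where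
  "tangent_at P X = X - (P \<bullet> X) *\<^sub>R P"

definition cos_angle :: "'a::real_inner \<Rightarrow> 'a \<Rightarrow> real" where
  "cos_angle u v = (u \<bullet> v) / (norm u * norm v)"

lemma sph_angle_eq_arccos_cos_angle:
  "sph_angle Q P R = arccos (cos_angle (tangent_at P Q) (tangent_at P R))"
  by (simp add: sph_angle_def cos_angle_def tangent_at_def Let_def)

lemma sph_angle_commute: "sph_angle Q P R = sph_angle R P Q"
  by (simp add: sph_angle_eq_arccos_cos_angle cos_angle_def inner_commute mult.commute)

lemma abs_cos_angle_le_1: "\<bar>cos_angle u v\<bar> \<le> 1"
proof (cases "norm u * norm v = 0")
  case False
  then have "0 < norm u * norm v"
    by (simp add: less_le)
  then show ?thesis
    using Cauchy_Schwarz_ineq2[of u v] by (simp add: cos_angle_def abs_div divide_le_eq_1)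
qed (auto simp: cos_angle_def)

lemma inner_tangent_at:
  assumes "norm P = 1"
  shows "tangent_at P X \<bullet> tangent_at P Y = X \<bullet> Y - (P \<bullet> X) * (P \<bullet> Y)"
proof -
  have "P \<bullet> P = 1"
    using assms by (simp add: norm_eq_1)
  then show ?thesis
    by (simp add: tangent_at_def inner_commute algebra_simps)
qed

lemma inner_tangent_at_self:
  assumes "norm P = 1"
  shows "P \<bullet> tangent_at P X = 0"
  using assms by (simp add: tangent_at_def inner_diff_right norm_eq_1)

lemma norm_tangent_at_power2:
  assumes "norm P = 1" "norm X = 1"
  shows "(norm (tangent_at P X))\<^sup>2 = 1 - (P \<bullet> X)\<^sup>2"
  using inner_tangent_at[OF assms(1), of X X] assms(2)
  by (simp add: power2_norm_eq_inner[symmetric] power2_eq_square)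

lemma inner_power2_less_of_cross3_nonzero:
  assumes "cross3 x y \<noteq> 0"
  shows "(x \<bullet> y)\<^sup>2 < (norm x * norm y)\<^sup>2"
proof -
  have "0 < (norm (cross3 x y))\<^sup>2"
    using assms by simp
  then show ?thesis
    using norm_cross_dot[of x y] by linarith
qed

lemma orient_rotate: "orient Q R P = orient P Q R"
  and orient_swap_left: "orient Q P R = - orient P Q R"
  and orient_swap_right: "orient P R Q = - orient P Q R"
  by (simp_all add: orient_def cross3_simps)

lemma cross3_nonzero_of_orient_nonzero: "orient P Q R \<noteq> 0 \<Longrightarrow> cross3 Q R \<noteq> 0"
  by (auto simp: orient_def)

lemma orient_tangent_at: "orient Q (tangent_at Q X) (tangent_at Q Y) = orient Q X Y"
  by (simp add: orient_def tangent_at_def cross3_simps)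

lemma orient_cramer:
  "orient a b c *\<^sub>R x = orient x b c *\<^sub>R a + orient a x c *\<^sub>R b + orient a b x *\<^sub>R c"
  by (simp add: orient_def cross3_simps forall_3)

lemma arccos_add_2_arccos_gt_pi:
  assumes "\<bar>x\<bar> \<le> 1" "\<bar>y\<bar> \<le> 1" "y\<^sup>2 < (1 - x) / 2"
  shows "pi < arccos x + 2 * arccos y"
proof (rule ccontr)
  assume "\<not> ?thesis"
  moreover have "0 \<le> arccos x" "arccos x \<le> pi" "0 \<le> arccos y"
    using assms by (auto intro: arccos_lbound arccos_ubound)
  ultimately have "cos (pi - arccos x) \<le> cos (2 * arccos y)"
    by (intro cos_monotone_0_pi_le) auto
  then have "- x \<le> 2 * y\<^sup>2 - 1"
    using assms by (simp add: cos_double_cos cos_arccos_abs)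
  then show False
    using assms(3) by simp
qed

lemma tangent_at_decomposition:
  assumes "norm Q = 1"
  shows "orient Q P S *\<^sub>R tangent_at Q R
     = orient Q R S *\<^sub>R tangent_at Q P + orient Q P R *\<^sub>R tangent_at Q S"
proof -
  define u v w where "u = tangent_at Q P" and "v = tangent_at Q S" and "w = tangent_at Q R"
  have "Q \<bullet> u = 0" "Q \<bullet> v = 0" "Q \<bullet> w = 0"
    using assms by (simp_all add: u_def v_def w_def inner_tangent_at_self)
  moreover have "Q \<bullet> (orient w u v *\<^sub>R Q)
      = Q \<bullet> (orient Q u v *\<^sub>R w + orient w Q v *\<^sub>R u + orient w u Q *\<^sub>R v)"
    by (simp only: orient_cramer[of w u v Q])
  ultimately have coplanar: "orient w u v = 0"
    using assms by (auto simp: inner_add_right norm_eq_1)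
  have "orient Q u v *\<^sub>R w = orient w u v *\<^sub>R Q + orient Q w v *\<^sub>R u + orient Q u w *\<^sub>R v"
    by (rule orient_cramer)
  then show ?thesis
    using coplanar by (simp add: u_def v_def w_def orient_tangent_at)
qed

text \<open>\<open>N\<close> is the length of \<open>l u + m v\<close> for unit vectors with \<open>u \<bullet> v = c\<close>; the claim follows
  from the strict triangle inequality \<open>\<bar>N - m\<bar> < l\<close>.\<close>
lemma cos_law_bound:
  fixes c l m N :: real
  assumes c: "\<bar>c\<bar> < 1" and l: "0 < l" and m: "0 < m" and N: "0 \<le> N"
    and cos_law: "N\<^sup>2 = l\<^sup>2 + m\<^sup>2 + 2 * l * m * c"
  shows "c < (l + m * c) / N"
proof -
  have "N\<^sup>2 - (l - m)\<^sup>2 = 2 * l * m * (1 + c)" "(l + m)\<^sup>2 - N\<^sup>2 = 2 * l * m * (1 - c)"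
    using cos_law by (simp_all add: power2_eq_square algebra_simps)
  moreover have "0 < 2 * l * m * (1 + c)" "0 < 2 * l * m * (1 - c)"
    using c l m by (simp_all add: abs_less_iff)
  ultimately have "(l - m)\<^sup>2 < N\<^sup>2" "N\<^sup>2 < (l + m)\<^sup>2"
    by simp_all
  then have lower: "\<bar>l - m\<bar> < N" and upper: "N < l + m"
    using power2_less_imp_less[of "\<bar>l - m\<bar>" N] power2_less_imp_less[of N "l + m"] N l m
    by simp_all
  have "c * (N - m) \<le> \<bar>c\<bar> * \<bar>N - m\<bar>"
    by (metis abs_ge_self abs_mult)
  also have "\<dots> \<le> \<bar>N - m\<bar>"
    using c by (simp add: mult_left_le_one_le)
  also have "\<bar>N - m\<bar> < l"
    using lower upper by (simp add: abs_less_iff)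
  finally have "c * N < l + m * c"
    by (simp add: right_diff_distrib mult.commute)
  moreover have "0 < N"
    using lower by linarith
  ultimately show ?thesis
    by (simp add: less_divide_eq mult.commute)
qed

lemma cos_angle_less_of_positive_combination:
  fixes u v :: "'a::real_inner"
  assumes indep: "\<bar>u \<bullet> v\<bar> < norm u * norm v" and "0 < l" "0 < m"
  shows "cos_angle u v < cos_angle u (l *\<^sub>R u + m *\<^sub>R v)"
proof -
  define w where "w = l *\<^sub>R u + m *\<^sub>R v"
  have "u \<noteq> 0" "v \<noteq> 0"
    using indep by auto
  then have pos: "0 < norm u" "0 < norm v"
    by simp_all
  define c where "c = cos_angle u v"
  have uv: "u \<bullet> v = norm u * norm v * c"
    using pos by (simp add: c_def cos_angle_def)
  have "\<bar>c\<bar> < 1"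
    using indep pos by (simp add: c_def cos_angle_def abs_div abs_mult divide_less_eq)
  moreover have "(norm w)\<^sup>2 = l\<^sup>2 * (u \<bullet> u) + m\<^sup>2 * (v \<bullet> v) + 2 * l * m * (u \<bullet> v)"
    unfolding power2_norm_eq_inner
    by (simp add: w_def inner_commute power2_eq_square algebra_simps)
  then have "(norm w)\<^sup>2 = (l * norm u)\<^sup>2 + (m * norm v)\<^sup>2 + 2 * (l * norm u) * (m * norm v) * c"
    by (simp add: dot_square_norm uv power_mult_distrib)
  ultimately have "c < (l * norm u + m * norm v * c) / norm w"
    using pos \<open>0 < l\<close> \<open>0 < m\<close> by (intro cos_law_bound) simp_all
  also have "\<dots> = cos_angle u w"
  proof -
    have "u \<bullet> w = norm u * (l * norm u + m * norm v * c)"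
      by (simp add: w_def uv dot_square_norm power2_eq_square algebra_simps)
    then show ?thesis
      using pos by (simp add: cos_angle_def)
  qed
  finally show ?thesis
    by (simp add: c_def w_def)
qed

lemma sph_angle_less_of_inside_angle:
  assumes Q: "norm Q = 1"
    and inside: "0 < orient Q P R * orient Q P S" "0 < orient Q R S * orient Q P S"
  shows "sph_angle P Q R < sph_angle P Q S"
proof -
  define u v where "u = tangent_at Q P" and "v = tangent_at Q S"
  define l m where "l = orient Q R S / orient Q P S" and "m = orient Q P R / orient Q P S"
  have o: "orient Q P S \<noteq> 0"
    using inside by auto
  have "0 < l" "0 < m"
    using inside by (simp_all add: l_def m_def zero_less_divide_iff zero_less_mult_iff)
  have "tangent_at Q R = (1 / orient Q P S) *\<^sub>R (orient Q P S *\<^sub>R tangent_at Q R)"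
    using o by simp
  also have "\<dots> = l *\<^sub>R u + m *\<^sub>R v"
    unfolding tangent_at_decomposition[OF Q, of P S R]
    by (simp add: l_def m_def u_def v_def scaleR_add_right)
  finally have R: "tangent_at Q R = l *\<^sub>R u + m *\<^sub>R v" .
  have "cross3 u v \<noteq> 0"
    using o cross3_nonzero_of_orient_nonzero[of Q u v]
    by (simp add: u_def v_def orient_tangent_at)
  then have "(u \<bullet> v)\<^sup>2 < (norm u * norm v)\<^sup>2"
    by (rule inner_power2_less_of_cross3_nonzero)
  then have "\<bar>u \<bullet> v\<bar> < norm u * norm v"
    using power2_less_imp_less[of "\<bar>u \<bullet> v\<bar>" "norm u * norm v"] by simp
  then have "cos_angle u v < cos_angle u (tangent_at Q R)"
    unfolding R using \<open>0 < l\<close> \<open>0 < m\<close> by (rule cos_angle_less_of_positive_combination)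
  then have "arccos (cos_angle u (tangent_at Q R)) < arccos (cos_angle u v)"
    using abs_cos_angle_le_1[of u v] abs_cos_angle_le_1[of u "tangent_at Q R"]
    by (intro arccos_less_arccos) (simp_all add: abs_le_iff)
  then show ?thesis
    by (simp add: sph_angle_eq_arccos_cos_angle u_def v_def)
qed

lemma isosceles_cos_apex:
  assumes P: "norm P = 1" and Q: "norm Q = 1" and R: "norm R = 1" and isosceles: "P \<bullet> Q = P \<bullet> R"
  shows "cos_angle (tangent_at P Q) (tangent_at P R) = (Q \<bullet> R - (P \<bullet> Q)\<^sup>2) / (1 - (P \<bullet> Q)\<^sup>2)"
proof -
  have PQ: "(norm (tangent_at P Q))\<^sup>2 = 1 - (P \<bullet> Q)\<^sup>2"
    and PR: "(norm (tangent_at P R))\<^sup>2 = 1 - (P \<bullet> Q)\<^sup>2"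
    using norm_tangent_at_power2[OF P Q] norm_tangent_at_power2[OF P R] isosceles by simp_all
  then have "norm (tangent_at P Q) = norm (tangent_at P R)"
    using power2_eq_imp_eq[of "norm (tangent_at P Q)" "norm (tangent_at P R)"] by simp
  then have "norm (tangent_at P Q) * norm (tangent_at P R) = 1 - (P \<bullet> Q)\<^sup>2"
    using PQ by (simp add: power2_eq_square)
  then show ?thesis
    using inner_tangent_at[OF P, of Q R] isosceles by (simp add: cos_angle_def power2_eq_square)
qed

lemma isosceles_cos_base_power2:
  assumes P: "norm P = 1" and Q: "norm Q = 1" and R: "norm R = 1" and isosceles: "P \<bullet> Q = P \<bullet> R"
  shows "(cos_angle (tangent_at Q P) (tangent_at Q R))\<^sup>2
    = (P \<bullet> Q - (P \<bullet> Q) * (Q \<bullet> R))\<^sup>2 / ((1 - (P \<bullet> Q)\<^sup>2) * (1 - (Q \<bullet> R)\<^sup>2))"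
proof -
  have "(norm (tangent_at Q P) * norm (tangent_at Q R))\<^sup>2 = (1 - (P \<bullet> Q)\<^sup>2) * (1 - (Q \<bullet> R)\<^sup>2)"
    using norm_tangent_at_power2[OF Q P] norm_tangent_at_power2[OF Q R]
    by (simp add: power_mult_distrib inner_commute)
  then show ?thesis
    using inner_tangent_at[OF Q, of P R] isosceles
    by (simp add: cos_angle_def power_divide inner_commute)
qed

lemma isosceles_apex_inner_bound:
  assumes P: "norm P = 1" and Q: "norm Q = 1" and R: "norm R = 1"
    and isosceles: "P \<bullet> Q = P \<bullet> R" and nondegenerate: "orient P Q R \<noteq> 0"
  shows "2 * (P \<bullet> Q)\<^sup>2 < 1 + Q \<bullet> R"
proof -
  have "orient Q P (Q + R) = orient Q P R"
    by (simp add: orient_def cross_add_right inner_add_right dot_cross_self)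
  then have "cross3 P (Q + R) \<noteq> 0"
    using nondegenerate cross3_nonzero_of_orient_nonzero[of Q P "Q + R"]
    by (simp add: orient_swap_left[of P Q R])
  then have "(P \<bullet> (Q + R))\<^sup>2 < (norm (Q + R))\<^sup>2"
    using inner_power2_less_of_cross3_nonzero[of P "Q + R"] P by simp
  moreover have "P \<bullet> (Q + R) = 2 * (P \<bullet> Q)" "(norm (Q + R))\<^sup>2 = 2 + 2 * (Q \<bullet> R)"
    using isosceles Q R
    by (simp_all add: power2_norm_eq_inner inner_add_left inner_add_right inner_commute norm_eq_1)
  ultimately show ?thesis
    by (simp add: power_mult_distrib)
qed

lemma isosceles_cos_inequality:
  fixes p q :: real
  assumes "p\<^sup>2 < 1" "q\<^sup>2 < 1" "2 * p\<^sup>2 < 1 + q"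
  shows "(p - p * q)\<^sup>2 / ((1 - p\<^sup>2) * (1 - q\<^sup>2)) < (1 - (q - p\<^sup>2) / (1 - p\<^sup>2)) / 2"
proof -
  have "0 < 1 - p\<^sup>2" "0 < 1 + q" "0 < 1 - q"
    using assms abs_square_less_1[of q] by (simp_all add: abs_less_iff)
  have num: "(p - p * q)\<^sup>2 = ((1 - q) * p\<^sup>2) * (1 - q)"
    and den: "(1 - p\<^sup>2) * (1 - q\<^sup>2) = ((1 - p\<^sup>2) * (1 + q)) * (1 - q)"
    by (simp_all add: power2_eq_square algebra_simps)
  have "1 - q \<noteq> 0"
    using \<open>0 < 1 - q\<close> by simp
  then have "(p - p * q)\<^sup>2 / ((1 - p\<^sup>2) * (1 - q\<^sup>2)) = (1 - q) / (1 - p\<^sup>2) * (p\<^sup>2 / (1 + q))"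
    unfolding num den by simp
  also have "\<dots> < (1 - q) / (1 - p\<^sup>2) * (1 / 2)"
    using \<open>0 < 1 - p\<^sup>2\<close> \<open>0 < 1 + q\<close> \<open>0 < 1 - q\<close> assms(3)
    by (intro mult_strict_left_mono) (simp_all add: divide_less_eq)
  also have "\<dots> = (1 - (q - p\<^sup>2) / (1 - p\<^sup>2)) / 2"
    using \<open>0 < 1 - p\<^sup>2\<close> by (simp add: field_simps)
  finally show ?thesis .
qed

lemma isosceles_sph_triangle_angle_sum:
  assumes P: "norm P = 1" and Q: "norm Q = 1" and R: "norm R = 1"
    and isosceles: "P \<bullet> Q = P \<bullet> R" and nondegenerate: "orient P Q R \<noteq> 0"
  shows "pi < sph_angle Q P R + 2 * sph_angle P Q R"
proof -
  have "(P \<bullet> Q)\<^sup>2 < 1"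
    using inner_power2_less_of_cross3_nonzero[of P Q] cross3_nonzero_of_orient_nonzero[of R P Q]
      nondegenerate P Q by (simp add: orient_rotate[of P Q R])
  moreover have "(Q \<bullet> R)\<^sup>2 < 1"
    using inner_power2_less_of_cross3_nonzero[of Q R] cross3_nonzero_of_orient_nonzero[of P Q R]
      nondegenerate Q R by simp
  ultimately have "(cos_angle (tangent_at Q P) (tangent_at Q R))\<^sup>2
      < (1 - cos_angle (tangent_at P Q) (tangent_at P R)) / 2"
    unfolding isosceles_cos_base_power2[OF assms(1-4)] isosceles_cos_apex[OF assms(1-4)]
    by (rule isosceles_cos_inequality[OF _ _ isosceles_apex_inner_bound[OF assms]])
  then show ?thesis
    unfolding sph_angle_eq_arccos_cos_angle
    by (rule arccos_add_2_arccos_gt_pi[OF abs_cos_angle_le_1 abs_cos_angle_le_1])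
qed

theorem lemma5:
  fixes V0 V1 V2 V3 :: "real^3" and a b c :: real
  assumes "convex_sph_quad V0 V1 V2 V3"
    and "sph_dist V0 V1 = a" and "sph_dist V3 V0 = a"
    and "sph_dist V1 V2 = b" and "sph_dist V2 V3 = c"
    and "a \<noteq> b" and "a \<noteq> c" and "b \<noteq> c"
  shows "sph_angle V3 V0 V1 + 2 * sph_angle V0 V1 V2 > pi
       \<and> sph_angle V3 V0 V1 + 2 * sph_angle V2 V3 V0 > pi"
proof -
  have unit: "norm V0 = 1" "norm V1 = 1" "norm V2 = 1" "norm V3 = 1"
    using assms(1) by (simp_all add: convex_sph_quad_def on_sphere_def)
  obtain s :: real where s: "s = 1 \<or> s = -1"
    and o: "0 < s * orient V0 V1 V2" "0 < s * orient V0 V1 V3"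
      "0 < s * orient V1 V2 V3" "0 < s * orient V1 V2 V0"
      "0 < s * orient V3 V0 V1" "0 < s * orient V3 V0 V2"
    using assms(1) unfolding convex_sph_quad_def by blast
  have same_sign: "0 < x * y" if "0 < s * x" "0 < s * y" for x y
    using s that by (auto simp: zero_less_mult_iff)
  have "\<bar>V0 \<bullet> V1\<bar> \<le> 1" "\<bar>V0 \<bullet> V3\<bar> \<le> 1"
    using Cauchy_Schwarz_ineq2[of V0 V1] Cauchy_Schwarz_ineq2[of V0 V3] unit by simp_all
  then have isosceles: "V0 \<bullet> V1 = V0 \<bullet> V3"
    using assms(2,3) arccos_eq_iff[of "V0 \<bullet> V1" "V0 \<bullet> V3"]
    by (simp add: sph_dist_def inner_commute)
  have "pi < sph_angle V1 V0 V3 + 2 * sph_angle V0 V1 V3"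
    using o(2) by (intro isosceles_sph_triangle_angle_sum[OF unit(1,2,4) isosceles]) auto
  moreover have "sph_angle V0 V1 V3 < sph_angle V0 V1 V2"
    using same_sign[OF o(2,1)] same_sign[OF o(3,4)]
    by (intro sph_angle_less_of_inside_angle[OF unit(2)])
      (simp_all add: orient_swap_left[of V0 V1] orient_swap_right[of V1 V2])
  moreover have "pi < sph_angle V3 V0 V1 + 2 * sph_angle V0 V3 V1"
    using o(2) isosceles
    by (intro isosceles_sph_triangle_angle_sum[OF unit(1,4,2)])
      (auto simp: orient_swap_right[of V0 V1 V3])
  moreover have "sph_angle V0 V3 V1 < sph_angle V0 V3 V2"
    using same_sign[OF o(5,6)] same_sign[OF o(3,6)]
    by (intro sph_angle_less_of_inside_angle[OF unit(4)]) (simp, metis orient_rotate)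
  ultimately show ?thesis
    using sph_angle_commute[of V1 V0 V3] sph_angle_commute[of V0 V3 V2] by simp
qed

end
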